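(* Let $W$ be the Witt algebra, the complex Lie algebra with basis $\{x_n\mid n\in\mathbb{Z}\}$ and bracket $[x_m,x_n]=(n-m)x_{m+n}$. Any left-symmetric algebra structure on the underlying vector space of $W$ whose commutator $xy-yx$ equals the bracket of $W$ is simple, i.e. has no ideals other than $0$ and itself.
   Context: A left-symmetric algebra is a vector space with bilinear product satisfying $(xy)z-x(yz)=(yx)z-y(xz)$ for all $x,y,z$. An ideal is a subspace $I$ with $AI\subseteq I$ and $IA\subseteq I$. *)

theory Defs
  imports Complex_Main "HOL-Library.Poly_Mapping"
begin

text \<open>The underlying complex vector space of the Witt algebra: finitely supported
  coefficient functions on the basis x_n, n in Z, i.e. the type int =>_0 complex;
  the basis vector x_n is Poly_Mapping.single n 1.\<close>

type_synonym witt_space = "int \<Rightarrow>\<^sub>0 complex"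

definition wscale :: "complex \<Rightarrow> witt_space \<Rightarrow> witt_space" where
  "wscale c a = Poly_Mapping.map (\<lambda>z. c * z) a"

definition witt_bracket :: "witt_space \<Rightarrow> witt_space \<Rightarrow> witt_space" where
  "witt_bracket a b =
     (\<Sum>m\<in>Poly_Mapping.keys a. \<Sum>n\<in>Poly_Mapping.keys b.
        Poly_Mapping.single (m + n) (Poly_Mapping.lookup a m * Poly_Mapping.lookup b n * of_int (n - m)))"

definition complex_bilinear :: "(witt_space \<Rightarrow> witt_space \<Rightarrow> witt_space) \<Rightarrow> bool" where
  "complex_bilinear p \<longleftrightarrow>
     (\<forall>a b c. p (a + b) c = p a c + p b c) \<and>
     (\<forall>a b c. p a (b + c) = p a b + p a c) \<and>
     (\<forall>k a b. p (wscale k a) b = wscale k (p a b)) \<and>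
     (\<forall>k a b. p a (wscale k b) = wscale k (p a b))"

definition left_symmetric :: "(witt_space \<Rightarrow> witt_space \<Rightarrow> witt_space) \<Rightarrow> bool" where
  "left_symmetric p \<longleftrightarrow>
     (\<forall>x y z. p (p x y) z - p x (p y z) = p (p y x) z - p y (p x z))"

definition is_subspace :: "witt_space set \<Rightarrow> bool" where
  "is_subspace I \<longleftrightarrow> 0 \<in> I \<and> (\<forall>a\<in>I. \<forall>b\<in>I. a + b \<in> I) \<and> (\<forall>k. \<forall>a\<in>I. wscale k a \<in> I)"

definition is_ideal :: "(witt_space \<Rightarrow> witt_space \<Rightarrow> witt_space) \<Rightarrow> witt_space set \<Rightarrow> bool" where
  "is_ideal p I \<longleftrightarrow> is_subspace I \<and> (\<forall>a. \<forall>i\<in>I. p a i \<in> I \<and> p i a \<in> I)"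

end

theory Submission
  imports Defs
begin

text \<open>An ideal of a left-symmetric algebra is also an ideal of its commutator Lie algebra,
  so it suffices that the Witt algebra is simple as a Lie algebra. For the latter, the
  basis vectors x_n are the eigenvectors of ad x_0 with the pairwise distinct eigenvalues n;
  applying ad x_0 - m to an element of a Lie ideal removes the coordinate m and rescales the
  others, so every coordinate direction of a nonzero element lies in the ideal. Finally
  [x_(-n), x_n] = 2n x_0 and [x_k, x_0] = -k x_k show that one basis vector generates all of W.\<close>

definition witt_lie_ideal :: "witt_space set \<Rightarrow> bool" where
  "witt_lie_ideal I \<longleftrightarrow> is_subspace I \<and> (\<forall>x. \<forall>i\<in>I. witt_bracket x i \<in> I)"

lemma lookup_wscale [simp]: "Poly_Mapping.lookup (wscale c a) k = c * Poly_Mapping.lookup a k"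
  by (simp add: wscale_def map.rep_eq when_def)

lemma wscale_single: "wscale c (Poly_Mapping.single k d) = Poly_Mapping.single k (c * d)"
  by (rule poly_mapping_eqI) (simp add: lookup_single when_def)

lemma poly_mapping_sum_single:
  "a = (\<Sum>k\<in>Poly_Mapping.keys a. Poly_Mapping.single k (Poly_Mapping.lookup a k))"
proof (rule poly_mapping_eqI)
  fix j
  show "Poly_Mapping.lookup a j
      = Poly_Mapping.lookup (\<Sum>k\<in>Poly_Mapping.keys a. Poly_Mapping.single k (Poly_Mapping.lookup a k)) j"
    by (cases "j \<in> Poly_Mapping.keys a")
       (auto simp: lookup_sum lookup_single when_def in_keys_iff)
qed

lemma witt_bracket_single:
  "witt_bracket (Poly_Mapping.single m c) (Poly_Mapping.single n d)
     = Poly_Mapping.single (m + n) (c * d * of_int (n - m))"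
  by (cases "c = 0"; cases "d = 0") (simp_all add: witt_bracket_def)

lemma lookup_witt_bracket_x0:
  "Poly_Mapping.lookup (witt_bracket (Poly_Mapping.single 0 1) a) j = of_int j * Poly_Mapping.lookup a j"
proof -
  have "Poly_Mapping.lookup (witt_bracket (Poly_Mapping.single 0 1) a) j
      = (\<Sum>n\<in>Poly_Mapping.keys a. Poly_Mapping.lookup a n * of_int n when n = j)"
    by (simp add: witt_bracket_def lookup_sum lookup_single)
  also have "\<dots> = of_int j * Poly_Mapping.lookup a j"
    by (cases "j \<in> Poly_Mapping.keys a") (auto simp: when_def in_keys_iff mult.commute)
  finally show ?thesis .
qed

lemma is_subspace_diff:
  assumes "is_subspace I" "a \<in> I" "b \<in> I"
  shows "a - b \<in> I"
proof -
  have "a - b = a + wscale (-1) b"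
    by (rule poly_mapping_eqI) (simp add: lookup_minus lookup_add)
  then show ?thesis
    using assms unfolding is_subspace_def by metis
qed

lemma is_subspace_sum:
  assumes "is_subspace I" "\<And>k. k \<in> A \<Longrightarrow> f k \<in> I"
  shows "sum f A \<in> I"
  using assms(2)
  by (induction A rule: infinite_finite_induct) (use assms(1) in \<open>auto simp: is_subspace_def\<close>)

lemma is_subspace_wscale_cancel:
  assumes "is_subspace I" "wscale c a \<in> I" "c \<noteq> 0"
  shows "a \<in> I"
proof -
  have "wscale (1 / c) (wscale c a) = a"
    using assms(3) by (intro poly_mapping_eqI) simp
  then show ?thesis
    using assms(1,2) unfolding is_subspace_def by metis
qed

lemma is_ideal_imp_witt_lie_ideal:
  assumes commutator: "\<forall>x y. p x y - p y x = witt_bracket x y"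
    and "is_ideal p I"
  shows "witt_lie_ideal I"
  unfolding witt_lie_ideal_def
proof (intro conjI allI ballI)
  show sub: "is_subspace I"
    using assms(2) by (simp add: is_ideal_def)
  fix x i assume "i \<in> I"
  then have "p x i \<in> I" "p i x \<in> I"
    using assms(2) by (auto simp: is_ideal_def)
  then show "witt_bracket x i \<in> I"
    using is_subspace_diff[OF sub] commutator by metis
qed

lemma witt_lie_ideal_single_in_keys:
  assumes "witt_lie_ideal I" "a \<in> I" "m \<in> Poly_Mapping.keys a"
  shows "Poly_Mapping.single m 1 \<in> I"
  using assms(2,3)
proof (induction "card (Poly_Mapping.keys a)" arbitrary: a rule: less_induct)
  case less
  have sub: "is_subspace I"
    using assms(1) by (simp add: witt_lie_ideal_def)
  show ?case
  proof (cases "Poly_Mapping.keys a = {m}")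
    case True
    then have "a = Poly_Mapping.single m (Poly_Mapping.lookup a m)"
      using poly_mapping_sum_single[of a] by simp
    then have "wscale (Poly_Mapping.lookup a m) (Poly_Mapping.single m 1) \<in> I"
      using less.prems(1) by (simp add: wscale_single)
    then show ?thesis
      using is_subspace_wscale_cancel[OF sub] less.prems(2) by (simp add: in_keys_iff)
  next
    case False
    then obtain m' where m': "m' \<in> Poly_Mapping.keys a" "m' \<noteq> m"
      using less.prems(2) by blast
    define b where "b = witt_bracket (Poly_Mapping.single 0 1) a - wscale (of_int m') a"
    have lookup_b: "Poly_Mapping.lookup b k = of_int (k - m') * Poly_Mapping.lookup a k" for k
      by (simp add: b_def lookup_minus lookup_witt_bracket_x0 algebra_simps del: single_one)
    have keys_b: "Poly_Mapping.keys b = Poly_Mapping.keys a - {m'}"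
      by (auto simp: in_keys_iff lookup_b)
    have "b \<in> I"
      unfolding b_def using assms(1) less.prems(1) is_subspace_diff[OF sub]
      by (simp add: witt_lie_ideal_def is_subspace_def)
    moreover have "card (Poly_Mapping.keys b) < card (Poly_Mapping.keys a)"
      using keys_b m'(1) by (metis card_Diff1_less finite_keys)
    ultimately show ?thesis
      using less.hyps keys_b less.prems(2) m'(2) by blast
  qed
qed

lemma witt_lie_ideal_single_generates:
  assumes "witt_lie_ideal I" "Poly_Mapping.single n 1 \<in> I"
  shows "I = UNIV"
proof -
  have sub: "is_subspace I" and bracket: "\<And>x i. i \<in> I \<Longrightarrow> witt_bracket x i \<in> I"
    using assms(1) by (auto simp: witt_lie_ideal_def)
  have x0: "Poly_Mapping.single 0 1 \<in> I"
  proof (cases "n = 0")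
    case False
    have "witt_bracket (Poly_Mapping.single (-n) 1) (Poly_Mapping.single n 1) \<in> I"
      using bracket assms(2) by blast
    then have "wscale (of_int (2 * n)) (Poly_Mapping.single 0 1) \<in> I"
      by (simp add: witt_bracket_single wscale_single del: single_one)
    then show ?thesis
      using is_subspace_wscale_cancel[OF sub] False by simp
  qed (use assms(2) in simp)
  have xk: "Poly_Mapping.single k 1 \<in> I" for k
  proof (cases "k = 0")
    case False
    have "witt_bracket (Poly_Mapping.single k 1) (Poly_Mapping.single 0 1) \<in> I"
      using bracket x0 by blast
    then have "wscale (of_int (- k)) (Poly_Mapping.single k 1) \<in> I"
      by (simp add: witt_bracket_single wscale_single del: single_one)
    then show ?thesis
      using is_subspace_wscale_cancel[OF sub] False by simp
  qed (use x0 in simp)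
  have "a \<in> I" for a
  proof -
    have "(\<Sum>k\<in>Poly_Mapping.keys a. wscale (Poly_Mapping.lookup a k) (Poly_Mapping.single k 1)) \<in> I"
      using sub xk by (intro is_subspace_sum) (auto simp: is_subspace_def)
    then show ?thesis
      using poly_mapping_sum_single[of a] by (simp add: wscale_single)
  qed
  then show ?thesis
    by blast
qed

theorem witt_lie_ideal_trivial:
  assumes "witt_lie_ideal I"
  shows "I = {0} \<or> I = UNIV"
proof (cases "I \<subseteq> {0}")
  case True
  then show ?thesis
    using assms by (auto simp: witt_lie_ideal_def is_subspace_def)
next
  case False
  then obtain a m where "a \<in> I" "m \<in> Poly_Mapping.keys a"
    by fastforce
  then show ?thesis
    using assms witt_lie_ideal_single_in_keys witt_lie_ideal_single_generates by blast
qed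

theorem proposition2p4:
  fixes p :: "witt_space \<Rightarrow> witt_space \<Rightarrow> witt_space"
  assumes "complex_bilinear p"
    and "left_symmetric p"
    and "\<forall>x y. p x y - p y x = witt_bracket x y"
  shows "\<forall>I. is_ideal p I \<longrightarrow> I = {0} \<or> I = UNIV"
  using is_ideal_imp_witt_lie_ideal[OF assms(3)] witt_lie_ideal_trivial by blast

end
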